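(* Let $A$ be a T-brace. (i) If $A$ is $\star$-hypercentral, then the additive group $A\star A$ is periodic. (ii) If $\beta$ is an ordinal and $a,b\in\zeta_\beta(\star,A)$, then $a\star b$ has finite order in $(A,+)$.
   Context: A (left) brace is a set $A$ with two operations $+$ and $\cdot$ such that $(A,+)$ is an abelian group, $(A,\cdot)$ is a group, and $a(b+c)=ab+ac-a$ for all $a,b,c\in A$. Put $a\star b=ab-a-b$; $A\star A$ is the subgroup of $(A,+)$ generated by all $x\star y$. A subbrace is a subset which is a subgroup of both $(A,+)$ and $(A,\cdot)$; a subbrace $L$ is an ideal if $a\star z, z\star a\in L$ for all $a\in A$, $z\in L$, and then the quotient brace $A/L$ is defined. $A$ is a T-brace if whenever $I$ is an ideal of $J$ and $J$ is an ideal of $A$, then $I$ is an ideal of $A$. The $\star$-center is $\zeta(\star,A)=\{a: a\star x=x\star a=0\ \forall x\}$; the upper $\star$-central series is $\zeta_0(\star,A)=0$, $\zeta_{\alpha+1}(\star,A)/\zeta_\alpha(\star,A)=\zeta(\star,A/\zeta_\alpha(\star,A))$, unions at limit ordinals, each term an ideal; its last term is $\zeta_\infty(\star,A)$, and $A$ is $\star$-hypercentral if $A=\zeta_\infty(\star,A)$. *)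

theory Defs
  imports "HOL-Algebra.Algebra"
begin

text \<open>A (left) brace is modelled as a ring-record A: (carrier A, \<oplus>, \<zero>) is the additive
abelian group and (carrier A, \<otimes>, \<one>) the multiplicative group.\<close>

definition brace :: "('a, 'b) ring_scheme \<Rightarrow> bool" where
  "brace A \<longleftrightarrow> abelian_group A \<and> group A \<and>
     (\<forall>a\<in>carrier A. \<forall>b\<in>carrier A. \<forall>c\<in>carrier A.
        a \<otimes>\<^bsub>A\<^esub> (b \<oplus>\<^bsub>A\<^esub> c) = (a \<otimes>\<^bsub>A\<^esub> b \<oplus>\<^bsub>A\<^esub> a \<otimes>\<^bsub>A\<^esub> c) \<ominus>\<^bsub>A\<^esub> a)"

definition bstar :: "('a, 'b) ring_scheme \<Rightarrow> 'a \<Rightarrow> 'a \<Rightarrow> 'a" where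
  "bstar A a b = (a \<otimes>\<^bsub>A\<^esub> b \<ominus>\<^bsub>A\<^esub> a) \<ominus>\<^bsub>A\<^esub> b"

definition star_square :: "('a, 'b) ring_scheme \<Rightarrow> 'a set" where
  "star_square A = generate (add_monoid A) {bstar A x y | x y. x \<in> carrier A \<and> y \<in> carrier A}"

definition subbrace :: "('a, 'b) ring_scheme \<Rightarrow> 'a set \<Rightarrow> bool" where
  "subbrace A L \<longleftrightarrow> subgroup L (add_monoid A) \<and> subgroup L A"

definition ideal_in :: "('a, 'b) ring_scheme \<Rightarrow> 'a set \<Rightarrow> 'a set \<Rightarrow> bool" where
  "ideal_in A J I \<longleftrightarrow> subbrace A J \<and> subbrace A I \<and> I \<subseteq> J \<and>
     (\<forall>a\<in>J. \<forall>z\<in>I. bstar A a z \<in> I \<and> bstar A z a \<in> I)"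

definition T_brace :: "('a, 'b) ring_scheme \<Rightarrow> bool" where
  "T_brace A \<longleftrightarrow> brace A \<and>
     (\<forall>I J. ideal_in A J I \<and> ideal_in A (carrier A) J \<longrightarrow> ideal_in A (carrier A) I)"

text \<open>For an ideal L, the preimage in A of the \<star>-center of A/L.\<close>
definition star_center_over :: "('a, 'b) ring_scheme \<Rightarrow> 'a set \<Rightarrow> 'a set" where
  "star_center_over A L =
     {a \<in> carrier A. \<forall>x\<in>carrier A. bstar A a x \<in> L \<and> bstar A x a \<in> L}"

text \<open>The terms \<zeta>_\<beta>(\<star>,A) of the upper \<star>-central series, \<beta> ranging over all ordinals:
  \<zeta>_0 = 0, \<zeta>_(\<alpha>+1) = star_center_over A \<zeta>_\<alpha>, unions (of chains) at limits.\<close>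
inductive_set upper_star_terms :: "('a, 'b) ring_scheme \<Rightarrow> 'a set set"
  for A :: "('a, 'b) ring_scheme" where
  zero: "{\<zero>\<^bsub>A\<^esub>} \<in> upper_star_terms A"
| succ: "L \<in> upper_star_terms A \<Longrightarrow> star_center_over A L \<in> upper_star_terms A"
| limit: "(\<And>L. L \<in> C \<Longrightarrow> L \<in> upper_star_terms A) \<Longrightarrow> C \<noteq> {} \<Longrightarrow> Complete_Partial_Order.chain (\<subseteq>) C
          \<Longrightarrow> \<Union>C \<in> upper_star_terms A"

definition star_hypercentral :: "('a, 'b) ring_scheme \<Rightarrow> bool" where
  "star_hypercentral A \<longleftrightarrow> carrier A \<in> upper_star_terms A"

definition finite_add_order :: "('a, 'b) ring_scheme \<Rightarrow> 'a \<Rightarrow> bool" where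
  "finite_add_order A g \<longleftrightarrow> (\<exists>n::nat. n > 0 \<and> [n] \<cdot>\<^bsub>A\<^esub> g = \<zero>\<^bsub>A\<^esub>)"

end

(*
  By transfinite induction along the upper \<star>-central series, every term Z is an ideal such that
  z \<star> x and x \<star> z have finite additive order for all z in Z and x in A.  Part (ii) is a
  special case, and part (i) follows because for Z = A these products generate A \<star> A.

  For the successor step let L be such a term, M its torsion part (again an ideal) and u a
  representative of an element of the \<star>-center of A/L.  Modulo M the map y \<mapsto> y \<star> x is additive
  on representatives of that center, so with w = 2u the subgroup J = \<int>w + L is an ideal of A,
  and I = \<int>w + \<int>(w \<star> w) + M is an ideal of J, hence of A since A is a T-brace.  If a nonzero
  multiple of u lies in L, the products with u are torsion at once.  Otherwise
  I \<inter> L \<subseteq> \<int>(w \<star> w) + M; since u \<star> w lies in I \<inter> L and w \<star> w \<equiv> 2(u \<star> w) mod M, an odd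
  multiple of u \<star> w lies in M.  So I \<inter> L is periodic, and it contains x \<star> w = 2(x \<star> u) and
  w \<star> x \<equiv> 2(u \<star> x).
*)
theory Submission
  imports Defs
begin

section \<open>Torsion and congruences in abelian groups\<close>

context abelian_group
begin

definition torsion :: "'a set" where
  "torsion = {a \<in> carrier G. finite_add_order G a}"

lemma mem_torsion_iff_int:
  "a \<in> torsion \<longleftrightarrow> a \<in> carrier G \<and> (\<exists>k::int. k \<noteq> 0 \<and> [k] \<cdot> a = \<zero>)"
proof (cases "a \<in> carrier G")
  case True
  have "(\<exists>n::nat. n > 0 \<and> [n] \<cdot> a = \<zero>) \<longleftrightarrow> (\<exists>k::int. k \<noteq> 0 \<and> [k] \<cdot> a = \<zero>)"
  proof
    assume "\<exists>n::nat. n > 0 \<and> [n] \<cdot> a = \<zero>"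
    then show "\<exists>k::int. k \<noteq> 0 \<and> [k] \<cdot> a = \<zero>"
      by (metis add_pow_int_ge of_nat_0_le_iff of_nat_0_less_iff less_irrefl nat_int)
  next
    assume "\<exists>k::int. k \<noteq> 0 \<and> [k] \<cdot> a = \<zero>"
    then obtain k :: int where k: "k \<noteq> 0" "[k] \<cdot> a = \<zero>" by blast
    then have "[\<bar>k\<bar>] \<cdot> a = \<zero>"
      using True by (cases "k \<ge> 0") (simp_all add: add.int_pow_neg)
    then show "\<exists>n::nat. n > 0 \<and> [n] \<cdot> a = \<zero>"
      using k(1) by (intro exI[of _ "nat \<bar>k\<bar>"]) (simp add: add_pow_int_ge)
  qed
  then show ?thesis
    by (simp add: torsion_def finite_add_order_def)
qed (simp add: torsion_def)

lemma int_pow_mem_torsion_iff: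
  assumes "a \<in> carrier G" and "(k::int) \<noteq> 0"
  shows "[k] \<cdot> a \<in> torsion \<longleftrightarrow> a \<in> torsion"
proof
  assume "[k] \<cdot> a \<in> torsion"
  then obtain m :: int where "m \<noteq> 0" "[m] \<cdot> ([k] \<cdot> a) = \<zero>"
    by (auto simp: mem_torsion_iff_int)
  then show "a \<in> torsion"
    using assms by (auto simp: mem_torsion_iff_int add.int_pow_pow intro!: exI[of _ "k * m"])
next
  assume "a \<in> torsion"
  then obtain m :: int where "m \<noteq> 0" "[m] \<cdot> a = \<zero>"
    by (auto simp: mem_torsion_iff_int)
  moreover have "[m] \<cdot> ([k] \<cdot> a) = [k] \<cdot> ([m] \<cdot> a)"
    using assms by (simp add: add.int_pow_pow mult.commute)
  ultimately show "[k] \<cdot> a \<in> torsion"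
    using assms by (auto simp: mem_torsion_iff_int)
qed

lemma torsion_subgroup: "subgroup torsion (add_monoid G)"
proof (rule add.subgroupI)
  have "\<zero> \<in> torsion"
    by (auto simp: mem_torsion_iff_int intro!: exI[of _ 1])
  then show "torsion \<subseteq> carrier G" "torsion \<noteq> {}"
    by (auto simp: torsion_def)
next
  fix a assume "a \<in> torsion"
  then show "\<ominus> a \<in> torsion"
    using int_pow_mem_torsion_iff[of a "-1"] by (simp add: torsion_def add.int_pow_neg)
next
  fix a b assume "a \<in> torsion" "b \<in> torsion"
  then obtain m n :: int where "m \<noteq> 0" "[m] \<cdot> a = \<zero>" "n \<noteq> 0" "[n] \<cdot> b = \<zero>"
    and ab: "a \<in> carrier G" "b \<in> carrier G"
    by (auto simp: mem_torsion_iff_int)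
  moreover have "[(m * n)] \<cdot> (a \<oplus> b) = [n] \<cdot> ([m] \<cdot> a) \<oplus> [m] \<cdot> ([n] \<cdot> b)"
    using ab by (simp add: add.int_pow_distrib add.int_pow_pow mult.commute)
  ultimately show "a \<oplus> b \<in> torsion"
    by (auto simp: mem_torsion_iff_int intro!: exI[of _ "m * n"])
qed

context
  fixes S assumes S: "subgroup S (add_monoid G)"
begin

interpretation S: additive_subgroup S G using S by (rule additive_subgroupI)

lemma diff_mem_sym:
  "\<lbrakk>a \<in> carrier G; b \<in> carrier G; a \<ominus> b \<in> S\<rbrakk> \<Longrightarrow> b \<ominus> a \<in> S"
  using S.a_inv_closed[of "a \<ominus> b"] by (simp add: minus_eq minus_add a_comm)

lemma diff_mem_trans:
  "\<lbrakk>a \<in> carrier G; b \<in> carrier G; c \<in> carrier G; a \<ominus> b \<in> S; b \<ominus> c \<in> S\<rbrakk> \<Longrightarrow> a \<ominus> c \<in> S"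
  using S.a_closed[of "a \<ominus> b" "b \<ominus> c"] by (simp add: minus_eq a_assoc r_neg1)

lemma diff_mem_add:
  "\<lbrakk>a \<in> carrier G; b \<in> carrier G; c \<in> carrier G; d \<in> carrier G; a \<ominus> b \<in> S; c \<ominus> d \<in> S\<rbrakk>
    \<Longrightarrow> (a \<oplus> c) \<ominus> (b \<oplus> d) \<in> S"
  using S.a_closed[of "a \<ominus> b" "c \<ominus> d"] by (simp add: minus_eq minus_add a_ac)

lemma diff_mem_int_pow:
  "\<lbrakk>a \<in> carrier G; b \<in> carrier G; a \<ominus> b \<in> S\<rbrakk> \<Longrightarrow> [(k::int)] \<cdot> a \<ominus> [k] \<cdot> b \<in> S"
  using add.subgroup_int_pow_closed[OF S, of "a \<ominus> b" k]
  by (simp add: minus_eq add.int_pow_distrib add.int_pow_inv)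

lemma diff_mem_imp_mem_iff:
  "\<lbrakk>a \<in> carrier G; b \<in> carrier G; a \<ominus> b \<in> S\<rbrakk> \<Longrightarrow> a \<in> S \<longleftrightarrow> b \<in> S"
proof -
  assume ab: "a \<in> carrier G" "b \<in> carrier G" and d: "a \<ominus> b \<in> S"
  have "a = (a \<ominus> b) \<oplus> b" "b = \<ominus> (a \<ominus> b) \<oplus> a"
    using ab by (simp_all add: minus_eq minus_add a_assoc l_neg r_neg1 a_comm[of b])
  then show ?thesis
    using d S.a_closed S.a_inv_closed by metis
qed

end

end

lemma (in group) subgroup_Union_chain:
  assumes "C \<noteq> {}" and "Complete_Partial_Order.chain (\<subseteq>) C" and "\<And>H. H \<in> C \<Longrightarrow> subgroup H G"
  shows "subgroup (\<Union>C) G"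
proof (rule subgroupI)
  show "\<Union>C \<subseteq> carrier G" "\<Union>C \<noteq> {}"
    using assms subgroup.subset subgroup.one_closed by fastforce+
next
  fix a assume "a \<in> \<Union>C"
  then show "inv a \<in> \<Union>C"
    using assms(3) subgroup.m_inv_closed by fastforce
next
  fix a b assume "a \<in> \<Union>C" "b \<in> \<Union>C"
  then obtain H K where "H \<in> C" "K \<in> C" "a \<in> H" "b \<in> K" by blast
  moreover have "H \<subseteq> K \<or> K \<subseteq> H"
    using assms(2) \<open>H \<in> C\<close> \<open>K \<in> C\<close> by (auto simp: chain_def)
  ultimately show "a \<otimes> b \<in> \<Union>C"
    using assms(3) subgroup.m_closed by (metis UnionI subsetD)
qed

definition int_multiples_plus :: "('a, 'b) ring_scheme \<Rightarrow> 'a \<Rightarrow> 'a set \<Rightarrow> 'a set" where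
  "int_multiples_plus R w S = {[(k::int)] \<cdot>\<^bsub>R\<^esub> w \<oplus>\<^bsub>R\<^esub> s | k s. s \<in> S}"

lemma add_pow_int_zero [simp]: "[(0::int)] \<cdot>\<^bsub>G\<^esub> x = \<zero>\<^bsub>G\<^esub>"
  by (simp add: add_pow_def)

context abelian_group
begin

lemma int_multiples_plus_subgroup:
  assumes S: "subgroup S (add_monoid G)" and w: "w \<in> carrier G"
  shows "subgroup (int_multiples_plus G w S) (add_monoid G)"
proof -
  interpret S: additive_subgroup S G using S by (rule additive_subgroupI)
  have mem: "[k] \<cdot> w \<oplus> s \<in> int_multiples_plus G w S" if "s \<in> S" for k :: int and s
    unfolding int_multiples_plus_def using that by blast
  show ?thesis
  proof (rule add.subgroupI)
    show "int_multiples_plus G w S \<subseteq> carrier G"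
      using S.a_subset w unfolding int_multiples_plus_def by blast
    show "int_multiples_plus G w S \<noteq> {}"
      using mem[OF S.zero_closed] by blast
  next
    fix a assume "a \<in> int_multiples_plus G w S"
    then obtain k :: int and s where a: "a = [k] \<cdot> w \<oplus> s" and s: "s \<in> S"
      unfolding int_multiples_plus_def by blast
    have "\<ominus> a = [(- k)] \<cdot> w \<oplus> \<ominus> s"
      using a w S.a_subset s by (auto simp: add.int_pow_neg minus_add)
    then show "\<ominus> a \<in> int_multiples_plus G w S"
      using mem s by simp
  next
    fix a b assume "a \<in> int_multiples_plus G w S" "b \<in> int_multiples_plus G w S"
    then obtain k l :: int and s t where ab: "a = [k] \<cdot> w \<oplus> s" "b = [l] \<cdot> w \<oplus> t"
      and st: "s \<in> S" "t \<in> S"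
      unfolding int_multiples_plus_def by blast
    have "a \<oplus> b = [(k + l)] \<cdot> w \<oplus> (s \<oplus> t)"
      using ab w S.a_subset st by (auto simp: add.int_pow_mult a_ac)
    then show "a \<oplus> b \<in> int_multiples_plus G w S"
      using mem st by simp
  qed
qed

lemma int_multiples_plus_subset:
  assumes "subgroup H (add_monoid G)" and "w \<in> H" and "S \<subseteq> H"
  shows "int_multiples_plus G w S \<subseteq> H"
proof -
  interpret H: additive_subgroup H G using assms(1) by (rule additive_subgroupI)
  show ?thesis
    using assms add.subgroup_int_pow_closed[OF assms(1) assms(2)]
    by (auto simp: int_multiples_plus_def)
qed

lemma subset_int_multiples_plus:
  assumes "S \<subseteq> carrier G" and "w \<in> carrier G"
  shows "S \<subseteq> int_multiples_plus G w S"
proof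
  fix s assume "s \<in> S"
  moreover have "s = [(0::int)] \<cdot> w \<oplus> s" using \<open>s \<in> S\<close> assms(1) by auto
  ultimately show "s \<in> int_multiples_plus G w S"
    unfolding int_multiples_plus_def by blast
qed

lemma generator_in_int_multiples_plus:
  assumes "\<zero> \<in> S" and "w \<in> carrier G"
  shows "w \<in> int_multiples_plus G w S"
proof -
  have "w = [(1::int)] \<cdot> w \<oplus> \<zero>" using assms(2) by simp
  then show ?thesis unfolding int_multiples_plus_def using assms(1) by blast
qed

lemma mem_int_multiples_plus_iff:
  assumes "w \<in> carrier G" and "S \<subseteq> carrier G"
  shows "e \<in> int_multiples_plus G w S \<longleftrightarrow> e \<in> carrier G \<and> (\<exists>k::int. e \<ominus> [k] \<cdot> w \<in> S)"
proof
  assume "e \<in> int_multiples_plus G w S"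
  then obtain k :: int and s where e: "e = [k] \<cdot> w \<oplus> s" and s: "s \<in> S"
    unfolding int_multiples_plus_def by blast
  then have "e \<ominus> [k] \<cdot> w = s"
    using assms by (auto simp: minus_eq a_comm[of "[k] \<cdot> w" s] a_assoc r_neg)
  moreover have "e \<in> carrier G"
    using e s assms by auto
  ultimately show "e \<in> carrier G \<and> (\<exists>k::int. e \<ominus> [k] \<cdot> w \<in> S)"
    using s by auto
next
  assume "e \<in> carrier G \<and> (\<exists>k::int. e \<ominus> [k] \<cdot> w \<in> S)"
  then obtain k :: int where e: "e \<in> carrier G" and k: "e \<ominus> [k] \<cdot> w \<in> S"
    by blast
  have "e = [k] \<cdot> w \<oplus> (e \<ominus> [k] \<cdot> w)"
    using e assms(1) by (simp add: minus_eq a_lcomm[of "[k] \<cdot> w"] r_neg)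
  then show "e \<in> int_multiples_plus G w S"
    unfolding int_multiples_plus_def using k by blast
qed

lemma int_multiples_plus_mono:
  "S \<subseteq> T \<Longrightarrow> int_multiples_plus G w S \<subseteq> int_multiples_plus G w T"
  unfolding int_multiples_plus_def by blast

end

section \<open>Braces and their ideals\<close>

locale left_brace = abelian_group A + group A for A (structure) +
  assumes distr: "\<lbrakk>a \<in> carrier A; b \<in> carrier A; c \<in> carrier A\<rbrakk> \<Longrightarrow>
     a \<otimes> (b \<oplus> c) = (a \<otimes> b \<oplus> a \<otimes> c) \<ominus> a"

lemma left_braceI: "brace A \<Longrightarrow> left_brace A"
  unfolding brace_def left_brace_def left_brace_axioms_def by auto

context left_brace
begin

abbreviation bstar_op (infixl "\<star>" 70) where "a \<star> b \<equiv> bstar A a b"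

lemma one_eq_zero: "\<one> = \<zero>"
proof -
  have "\<one> \<otimes> (\<zero> \<oplus> \<zero>) = (\<one> \<otimes> \<zero> \<oplus> \<one> \<otimes> \<zero>) \<ominus> \<one>"
    by (rule distr) auto
  then have "\<zero> \<oplus> \<ominus> \<one> = \<zero>"
    by (simp add: a_minus_def)
  then show ?thesis
    by (metis add.inv_closed add.inv_eq_1_iff add.l_one one_closed)
qed

lemma bstar_closed [intro, simp]: "\<lbrakk>a \<in> carrier A; b \<in> carrier A\<rbrakk> \<Longrightarrow> a \<star> b \<in> carrier A"
  by (simp add: bstar_def)

lemma mult_eq_add_bstar: "\<lbrakk>a \<in> carrier A; b \<in> carrier A\<rbrakk> \<Longrightarrow> a \<otimes> b = a \<oplus> b \<oplus> a \<star> b"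
  by (simp add: bstar_def minus_eq minus_add a_ac r_neg r_neg2)

lemma bstar_add_right:
  "\<lbrakk>a \<in> carrier A; b \<in> carrier A; c \<in> carrier A\<rbrakk> \<Longrightarrow> a \<star> (b \<oplus> c) = a \<star> b \<oplus> a \<star> c"
  by (simp add: bstar_def distr minus_eq minus_add a_ac)

lemma bstar_right_hom: "a \<in> carrier A \<Longrightarrow> bstar A a \<in> hom (add_monoid A) (add_monoid A)"
  by (rule homI) (simp_all add: bstar_add_right)

lemma bstar_int_pow_right:
  "\<lbrakk>a \<in> carrier A; b \<in> carrier A\<rbrakk> \<Longrightarrow> a \<star> ([(k::int)] \<cdot> b) = [k] \<cdot> (a \<star> b)"
  using hom_int_pow[OF bstar_right_hom] add.group_axioms by (simp add: add_pow_def)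

lemma bstar_zero_right [simp]: "a \<in> carrier A \<Longrightarrow> a \<star> \<zero> = \<zero>"
  using bstar_int_pow_right[of a \<zero> 0] by simp

lemma bstar_zero_left [simp]: "a \<in> carrier A \<Longrightarrow> \<zero> \<star> a = \<zero>"
  using mult_eq_add_bstar[of \<zero> a] l_one[of a] by (simp add: one_eq_zero)

lemma bstar_neg_right: "\<lbrakk>a \<in> carrier A; b \<in> carrier A\<rbrakk> \<Longrightarrow> a \<star> (\<ominus> b) = \<ominus> (a \<star> b)"
  using bstar_int_pow_right[of a b "-1"] by (simp add: add.int_pow_neg)

lemma bstar_mult_left:
  assumes "a \<in> carrier A" "b \<in> carrier A" "c \<in> carrier A"
  shows "(a \<otimes> b) \<star> c = a \<star> (b \<star> c) \<oplus> b \<star> c \<oplus> a \<star> c"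
proof -
  define t where "t = a \<otimes> b"
  have t: "t \<in> carrier A" "t = a \<oplus> b \<oplus> a \<star> b"
    using assms by (simp_all add: t_def mult_eq_add_bstar)
  have "(a \<oplus> b \<oplus> a \<star> b) \<oplus> c \<oplus> t \<star> c = t \<otimes> c"
    using t(1) assms by (simp only: t(2)[symmetric] mult_eq_add_bstar)
  also have "\<dots> = a \<otimes> (b \<otimes> c)"
    using assms by (simp add: t_def m_assoc)
  also have "\<dots> = (a \<oplus> b \<oplus> a \<star> b) \<oplus> c \<oplus> (a \<star> (b \<star> c) \<oplus> b \<star> c \<oplus> a \<star> c)"
    using assms by (simp add: mult_eq_add_bstar bstar_add_right a_ac)
  finally show ?thesis
    using assms by (simp add: t_def)
qed

lemma subbrace_carrier: "subbrace A (carrier A)"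
  unfolding subbrace_def using add.subgroup_self subgroup_self by simp

lemma ideal_inI:
  assumes S: "subgroup S (add_monoid A)" and J: "subbrace A J" and "S \<subseteq> J"
    and closed: "\<And>s y. s \<in> S \<Longrightarrow> y \<in> J \<Longrightarrow> y \<star> s \<in> S \<and> s \<star> y \<in> S"
  shows "ideal_in A J S"
proof -
  interpret S: additive_subgroup S A using S by (rule additive_subgroupI)
  have "subgroup S A"
  proof (rule subgroupI)
    show "S \<subseteq> carrier A" "S \<noteq> {}"
      using S.a_subset S.zero_closed by blast+
  next
    fix a assume a: "a \<in> S"
    have a_carrier: "a \<in> carrier A" and inv_a: "inv a \<in> J"
      using a S.a_subset \<open>S \<subseteq> J\<close> J subgroup.m_inv_closed[of J A a]
      by (auto simp: subbrace_def)
    have "inv a \<oplus> (a \<oplus> a \<star> inv a) = \<zero>"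
      using mult_eq_add_bstar[of a "inv a"] r_inv[OF a_carrier] a_carrier
      by (simp add: one_eq_zero a_ac)
    then have "inv a = \<ominus> (a \<oplus> a \<star> inv a)"
      using a_carrier by (simp add: add.inv_equality)
    then show "inv a \<in> S"
      using a closed[OF a inv_a] S.a_closed S.a_inv_closed by metis
  next
    fix a b assume "a \<in> S" "b \<in> S"
    then show "a \<otimes> b \<in> S"
      using closed[of b a] \<open>S \<subseteq> J\<close> S.a_subset by (auto simp: mult_eq_add_bstar)
  qed
  then show ?thesis
    using assms unfolding ideal_in_def subbrace_def by auto
qed

lemma ideal_in_carrierI:
  assumes "subgroup S (add_monoid A)"
    and "\<And>s x. s \<in> S \<Longrightarrow> x \<in> carrier A \<Longrightarrow> x \<star> s \<in> S \<and> s \<star> x \<in> S"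
  shows "ideal_in A (carrier A) S"
  using assms subgroup.subset[OF assms(1)] by (intro ideal_inI subbrace_carrier) auto

lemma ideal_in_add_subgroup: "ideal_in A J L \<Longrightarrow> subgroup L (add_monoid A)"
  by (simp add: ideal_in_def subbrace_def)

lemma ideal_in_subset: "ideal_in A J L \<Longrightarrow> L \<subseteq> carrier A"
  using subgroup.subset[OF ideal_in_add_subgroup] by simp

lemma ideal_bstar_closed:
  "\<lbrakk>ideal_in A (carrier A) L; z \<in> L; x \<in> carrier A\<rbrakk> \<Longrightarrow> x \<star> z \<in> L \<and> z \<star> x \<in> L"
  by (simp add: ideal_in_def)

lemma zero_ideal: "ideal_in A (carrier A) {\<zero>}"
  using add.triv_subgroup by (intro ideal_in_carrierI) auto

lemma Union_chain_ideal:
  assumes "C \<noteq> {}" and "Complete_Partial_Order.chain (\<subseteq>) C"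
    and "\<And>L. L \<in> C \<Longrightarrow> ideal_in A (carrier A) L"
  shows "ideal_in A (carrier A) (\<Union>C)"
  using assms ideal_bstar_closed
  by (intro ideal_in_carrierI add.subgroup_Union_chain ideal_in_add_subgroup) blast+

lemma torsion_part_ideal:
  assumes "ideal_in A (carrier A) L"
    and "\<And>l x. l \<in> L \<Longrightarrow> x \<in> carrier A \<Longrightarrow> x \<star> l \<in> torsion \<and> l \<star> x \<in> torsion"
  shows "ideal_in A (carrier A) (L \<inter> torsion)"
  using assms ideal_bstar_closed
  by (intro ideal_in_carrierI add.subgroups_Inter_pair torsion_subgroup ideal_in_add_subgroup) auto

end

section \<open>The \<star>-center modulo an ideal\<close>

text \<open>Congruences modulo M stand in for computations in the quotient brace A/M, in which
  L/M is annihilated by \<star> from both sides.\<close>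

locale star_central_mod = left_brace +
  fixes L M
  assumes ideal_L: "ideal_in A (carrier A) L"
    and ideal_M: "ideal_in A (carrier A) M"
    and bstar_in_M: "\<lbrakk>l \<in> L; x \<in> carrier A\<rbrakk> \<Longrightarrow> x \<star> l \<in> M \<and> l \<star> x \<in> M"
begin

sublocale L: additive_subgroup L A
  using ideal_in_add_subgroup[OF ideal_L] by (rule additive_subgroupI)

sublocale M: additive_subgroup M A
  using ideal_in_add_subgroup[OF ideal_M] by (rule additive_subgroupI)

lemma bstar_add_ideal_left_cong:
  assumes v: "v \<in> carrier A" and l: "l \<in> L" and x: "x \<in> carrier A"
  shows "(v \<oplus> l) \<star> x \<ominus> v \<star> x \<in> M"
proof -
  define l' where "l' = inv v \<star> l \<oplus> l"
  have l': "l' \<in> L" "l' \<in> carrier A"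
    unfolding l'_def using ideal_bstar_closed[OF ideal_L l] v L.a_subset l by auto
  have l_carrier: "l \<in> carrier A"
    using l L.a_subset by blast
  have "v \<otimes> l' = v \<oplus> l \<oplus> (v \<star> (inv v \<star> l) \<oplus> inv v \<star> l \<oplus> v \<star> l)"
    using v l_carrier by (simp add: l'_def mult_eq_add_bstar bstar_add_right a_ac)
  also have "v \<star> (inv v \<star> l) \<oplus> inv v \<star> l \<oplus> v \<star> l = \<zero>"
    using bstar_mult_left[of v "inv v" l] v l_carrier by (simp add: one_eq_zero)
  finally have "v \<otimes> l' = v \<oplus> l"
    using v l_carrier by simp
  then have "(v \<oplus> l) \<star> x \<ominus> v \<star> x = v \<star> (l' \<star> x) \<oplus> l' \<star> x"
    using bstar_mult_left[OF v l'(2) x] v l'(2) x by (simp add: minus_eq a_assoc r_neg)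
  then show ?thesis
    using bstar_in_M[OF l'(1) x] ideal_bstar_closed[OF ideal_M _ v] by auto
qed

lemma bstar_add_left_cong:
  assumes v: "v \<in> carrier A" and w: "w \<in> carrier A" and x: "x \<in> carrier A"
    and "v \<star> w \<in> L" and "w \<star> x \<in> L"
  shows "(v \<oplus> w) \<star> x \<ominus> (v \<star> x \<oplus> w \<star> x) \<in> M"
proof -
  have "v \<oplus> w = v \<otimes> w \<oplus> \<ominus> (v \<star> w)"
    using v w by (simp add: mult_eq_add_bstar a_assoc r_neg)
  then have first: "(v \<oplus> w) \<star> x \<ominus> (v \<otimes> w) \<star> x \<in> M"
    using bstar_add_ideal_left_cong[of "v \<otimes> w" "\<ominus> (v \<star> w)" x] assms by simp
  have second: "(v \<otimes> w) \<star> x \<ominus> (v \<star> x \<oplus> w \<star> x) \<in> M"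
  proof -
    have "(v \<otimes> w) \<star> x = v \<star> (w \<star> x) \<oplus> (v \<star> x \<oplus> w \<star> x)"
      using v w x by (simp add: bstar_mult_left a_assoc a_comm[of "w \<star> x" "v \<star> x"])
    then have "(v \<otimes> w) \<star> x \<ominus> (v \<star> x \<oplus> w \<star> x) = v \<star> (w \<star> x)"
      using v w x by (simp add: minus_eq a_assoc r_neg)
    then show ?thesis
      using bstar_in_M[OF \<open>w \<star> x \<in> L\<close> v] by simp
  qed
  show ?thesis
    using diff_mem_trans[OF M.a_subgroup _ _ _ first second] v w x by simp
qed

lemma bstar_int_pow_left_cong:
  assumes w: "w \<in> star_center_over A L" and x: "x \<in> carrier A"
  shows "([(k::int)] \<cdot> w) \<star> x \<ominus> [k] \<cdot> (w \<star> x) \<in> M"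
proof -
  have w_carrier: "w \<in> carrier A" and wx: "w \<star> x \<in> L"
    and in_L: "\<And>y. y \<in> carrier A \<Longrightarrow> y \<star> w \<in> L"
    using w x by (auto simp: star_center_over_def)
  have step: "([i] \<cdot> w \<oplus> w) \<star> x \<ominus> (([i] \<cdot> w) \<star> x \<oplus> w \<star> x) \<in> M" for i :: int
    using bstar_add_left_cong[OF _ w_carrier x in_L wx] w_carrier by simp
  show ?thesis
  proof (induction k rule: int_induct[where k = 0])
    case base
    show ?case using x by (simp add: r_neg minus_eq)
  next
    case (step1 i)
    have "(([i] \<cdot> w) \<star> x \<oplus> w \<star> x) \<ominus> ([i] \<cdot> (w \<star> x) \<oplus> w \<star> x) \<in> M"
      using diff_mem_add[OF M.a_subgroup _ _ _ _ step1.IH, of "w \<star> x" "w \<star> x"] w_carrier x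
      by (simp add: r_neg minus_eq)
    then show ?case
      using diff_mem_trans[OF M.a_subgroup _ _ _ step[of i]] w_carrier x
      by (simp add: add.int_pow_mult)
  next
    case (step2 i)
    have split: "[i] \<cdot> w = [(i - 1)] \<cdot> w \<oplus> w"
      "[i] \<cdot> (w \<star> x) = [(i - 1)] \<cdot> (w \<star> x) \<oplus> w \<star> x"
      using add.int_pow_mult[of w "i - 1" 1] add.int_pow_mult[of "w \<star> x" "i - 1" 1] w_carrier x
      by simp_all
    have "([i] \<cdot> w) \<star> x \<ominus> (([(i - 1)] \<cdot> w) \<star> x \<oplus> w \<star> x) \<in> M"
      using step[of "i - 1"] split(1) by simp
    from diff_mem_trans[OF M.a_subgroup _ _ _ diff_mem_sym[OF M.a_subgroup _ _ this] step2.IH]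
    have "(([(i - 1)] \<cdot> w) \<star> x \<oplus> w \<star> x) \<ominus> ([(i - 1)] \<cdot> (w \<star> x) \<oplus> w \<star> x) \<in> M"
      using split(2) w_carrier x by simp
    then show ?case
      using w_carrier x
      by (simp add: minus_eq minus_add a_assoc a_lcomm[of "w \<star> x" "\<ominus> ([(i - 1)] \<cdot> (w \<star> x))"] r_neg)
  qed
qed

lemma bstar_int_multiples_plus_cong:
  assumes w: "w \<in> star_center_over A L" and l: "l \<in> L" and x: "x \<in> carrier A"
  shows "([(k::int)] \<cdot> w \<oplus> l) \<star> x \<ominus> [k] \<cdot> (w \<star> x) \<in> M"
    and "x \<star> ([k] \<cdot> w \<oplus> l) \<ominus> [k] \<cdot> (x \<star> w) \<in> M"
proof -
  have w_carrier: "w \<in> carrier A" and l_carrier: "l \<in> carrier A"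
    using w l L.a_subset by (auto simp: star_center_over_def)
  show "([k] \<cdot> w \<oplus> l) \<star> x \<ominus> [k] \<cdot> (w \<star> x) \<in> M"
    using diff_mem_trans[OF M.a_subgroup _ _ _
        bstar_add_ideal_left_cong[OF _ l x] bstar_int_pow_left_cong[OF w x]] w_carrier l_carrier x
    by simp
  have "x \<star> ([k] \<cdot> w \<oplus> l) \<ominus> [k] \<cdot> (x \<star> w) = x \<star> l"
    using w_carrier l_carrier x
    by (simp add: bstar_add_right bstar_int_pow_right minus_eq a_comm[of "[k] \<cdot> (x \<star> w)"] a_assoc r_neg)
  then show "x \<star> ([k] \<cdot> w \<oplus> l) \<ominus> [k] \<cdot> (x \<star> w) \<in> M"
    using bstar_in_M[OF l x] by simp
qed

lemma bstar_int_multiples_plus_pair_cong: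
  assumes w: "w \<in> star_center_over A L" and "l \<in> L" and "r \<in> L"
  shows "([(k::int)] \<cdot> w \<oplus> l) \<star> ([(m::int)] \<cdot> w \<oplus> r) \<ominus> [(m * k)] \<cdot> (w \<star> w) \<in> M"
proof -
  have w_carrier: "w \<in> carrier A" and lr: "l \<in> carrier A" "r \<in> carrier A"
    using assms L.a_subset by (auto simp: star_center_over_def)
  have left: "([k] \<cdot> w \<oplus> l) \<star> ([m] \<cdot> w \<oplus> r) \<ominus> [k] \<cdot> (w \<star> ([m] \<cdot> w \<oplus> r)) \<in> M"
    using bstar_int_multiples_plus_cong(1)[OF w \<open>l \<in> L\<close>] w_carrier lr by simp
  have right: "[k] \<cdot> (w \<star> ([m] \<cdot> w \<oplus> r)) \<ominus> [k] \<cdot> ([m] \<cdot> (w \<star> w)) \<in> M"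
    using diff_mem_int_pow[OF M.a_subgroup _ _ bstar_int_multiples_plus_cong(2)[OF w \<open>r \<in> L\<close> w_carrier]]
      w_carrier lr by simp
  have "([k] \<cdot> w \<oplus> l) \<star> ([m] \<cdot> w \<oplus> r) \<ominus> [k] \<cdot> ([m] \<cdot> (w \<star> w)) \<in> M"
    by (rule diff_mem_trans[OF M.a_subgroup _ _ _ left right]) (use w_carrier lr in simp_all)
  then show ?thesis
    using w_carrier by (simp add: add.int_pow_pow)
qed

end

context left_brace
begin

lemma ideal_subset_star_center_over:
  "ideal_in A (carrier A) L \<Longrightarrow> L \<subseteq> star_center_over A L"
  using ideal_in_subset ideal_bstar_closed by (fastforce simp: star_center_over_def)

lemma neg_mem_star_center_over:
  assumes L: "ideal_in A (carrier A) L" and a: "a \<in> star_center_over A L"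
  shows "\<ominus> a \<in> star_center_over A L"
proof -
  interpret star_central_mod A L L
    using L ideal_bstar_closed by unfold_locales auto
  have "(\<ominus> a) \<star> x \<in> L \<and> x \<star> (\<ominus> a) \<in> L" if x: "x \<in> carrier A" for x
  proof
    have ax: "a \<in> carrier A" "a \<star> x \<in> L"
      using a x by (auto simp: star_center_over_def)
    have "(\<ominus> a) \<star> x \<ominus> \<ominus> (a \<star> x) \<in> L"
      using bstar_int_pow_left_cong[OF a x, of "- 1"] ax(1) x by (simp add: add.int_pow_neg)
    from diff_mem_imp_mem_iff[OF L.a_subgroup _ _ this] show "(\<ominus> a) \<star> x \<in> L"
      using ax x by simp
    show "x \<star> (\<ominus> a) \<in> L"
      using a x by (auto simp: star_center_over_def bstar_neg_right)
  qed
  then show ?thesis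
    using a by (auto simp: star_center_over_def)
qed

lemma add_mem_star_center_over:
  assumes L: "ideal_in A (carrier A) L"
    and a: "a \<in> star_center_over A L" and b: "b \<in> star_center_over A L"
  shows "a \<oplus> b \<in> star_center_over A L"
proof -
  interpret star_central_mod A L L
    using L ideal_bstar_closed by unfold_locales auto
  have "(a \<oplus> b) \<star> x \<in> L \<and> x \<star> (a \<oplus> b) \<in> L" if x: "x \<in> carrier A" for x
  proof
    have ab: "a \<in> carrier A" "b \<in> carrier A" "a \<star> x \<in> L" "b \<star> x \<in> L" "a \<star> b \<in> L"
      using a b x by (auto simp: star_center_over_def)
    have "(a \<oplus> b) \<star> x \<ominus> (a \<star> x \<oplus> b \<star> x) \<in> L"
      using ab x by (intro bstar_add_left_cong)
    from diff_mem_imp_mem_iff[OF L.a_subgroup _ _ this] show "(a \<oplus> b) \<star> x \<in> L"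
      using ab x by simp
    show "x \<star> (a \<oplus> b) \<in> L"
      using a b x by (auto simp: star_center_over_def bstar_add_right)
  qed
  then show ?thesis
    using a b by (auto simp: star_center_over_def)
qed

lemma star_center_over_subgroup:
  assumes L: "ideal_in A (carrier A) L"
  shows "subgroup (star_center_over A L) (add_monoid A)"
proof (rule add.subgroupI)
  show "star_center_over A L \<subseteq> carrier A"
    by (auto simp: star_center_over_def)
  show "star_center_over A L \<noteq> {}"
    using ideal_subset_star_center_over[OF L] additive_subgroup.zero_closed[of L A]
      ideal_in_add_subgroup[OF L] by (blast intro: additive_subgroupI)
qed (use L neg_mem_star_center_over add_mem_star_center_over in auto)

lemma ideal_between_ideal_and_star_center:
  assumes "ideal_in A (carrier A) L" and "subgroup S (add_monoid A)"
    and "L \<subseteq> S" and "S \<subseteq> star_center_over A L"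
  shows "ideal_in A (carrier A) S"
  using assms by (intro ideal_in_carrierI) (auto simp: star_center_over_def)

lemma star_center_over_ideal:
  "ideal_in A (carrier A) L \<Longrightarrow> ideal_in A (carrier A) (star_center_over A L)"
  using ideal_between_ideal_and_star_center star_center_over_subgroup ideal_subset_star_center_over
  by blast

end

section \<open>The successor step\<close>

locale hypercentral_step = left_brace +
  fixes L u
  assumes ideal_of_ideal_is_ideal:
      "\<And>I J. ideal_in A J I \<Longrightarrow> ideal_in A (carrier A) J \<Longrightarrow> ideal_in A (carrier A) I"
    and ideal_L: "ideal_in A (carrier A) L"
    and bstar_L_torsion: "\<And>l x. l \<in> L \<Longrightarrow> x \<in> carrier A \<Longrightarrow> x \<star> l \<in> torsion \<and> l \<star> x \<in> torsion"
    and u_center: "u \<in> star_center_over A L"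
begin

abbreviation M where "M \<equiv> L \<inter> torsion"

sublocale star_central_mod A L M
  using ideal_L torsion_part_ideal[OF ideal_L bstar_L_torsion] ideal_bstar_closed[OF ideal_L]
    bstar_L_torsion
  by unfold_locales auto

lemma u_carrier: "u \<in> carrier A"
  using u_center by (simp add: star_center_over_def)

lemma torsion_if_bstar_int_pow_torsion:
  assumes "(n::int) \<noteq> 0" and x: "x \<in> carrier A"
    and "x \<star> ([n] \<cdot> u) \<in> torsion" and "([n] \<cdot> u) \<star> x \<in> torsion"
  shows "x \<star> u \<in> torsion \<and> u \<star> x \<in> torsion"
proof
  show "x \<star> u \<in> torsion"
    using assms(3) int_pow_mem_torsion_iff[OF _ assms(1)] x u_carrier
    by (simp add: bstar_int_pow_right)
  have "([n] \<cdot> u) \<star> x \<ominus> [n] \<cdot> (u \<star> x) \<in> torsion"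
    using bstar_int_pow_left_cong[OF u_center x] by blast
  from diff_mem_imp_mem_iff[OF torsion_subgroup _ _ this] have "[n] \<cdot> (u \<star> x) \<in> torsion"
    using assms(4) x u_carrier by simp
  then show "u \<star> x \<in> torsion"
    using int_pow_mem_torsion_iff[OF _ assms(1)] x u_carrier by simp
qed

abbreviation w where "w \<equiv> [(2::int)] \<cdot> u"

abbreviation J where "J \<equiv> int_multiples_plus A w L"

abbreviation I where "I \<equiv> int_multiples_plus A w (int_multiples_plus A (w \<star> w) M)"

lemma w_center: "w \<in> star_center_over A L"
  using add.subgroup_int_pow_closed[OF star_center_over_subgroup[OF ideal_L] u_center] .

lemma w_carrier: "w \<in> carrier A"
  using u_carrier by simp

lemma w_bstar_w_in_L: "w \<star> w \<in> L"
  using w_center w_carrier by (simp add: star_center_over_def)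

lemma int_multiples_plus_w_bstar_w_subset_L: "int_multiples_plus A (w \<star> w) M \<subseteq> L"
  using int_multiples_plus_subset[OF L.a_subgroup w_bstar_w_in_L] by blast

lemma ideal_J: "ideal_in A (carrier A) J"
proof (rule ideal_between_ideal_and_star_center[OF ideal_L])
  show "subgroup J (add_monoid A)"
    by (rule int_multiples_plus_subgroup[OF L.a_subgroup w_carrier])
  show "L \<subseteq> J"
    by (rule subset_int_multiples_plus[OF L.a_subset w_carrier])
  show "J \<subseteq> star_center_over A L"
    by (rule int_multiples_plus_subset[OF star_center_over_subgroup[OF ideal_L] w_center
          ideal_subset_star_center_over[OF ideal_L]])
qed

lemma ideal_of_J_I: "ideal_in A J I"
proof (rule ideal_inI)
  show "subgroup I (add_monoid A)"
    using int_multiples_plus_subgroup[OF int_multiples_plus_subgroup[OF M.a_subgroup] w_carrier]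
      w_carrier by simp
  show "subbrace A J"
    using ideal_J by (simp add: ideal_in_def)
  show "I \<subseteq> J"
    by (rule int_multiples_plus_mono[OF int_multiples_plus_w_bstar_w_subset_L])
next
  fix s y assume "s \<in> I" "y \<in> J"
  then obtain m k :: int and r l where s: "s = [m] \<cdot> w \<oplus> r" "r \<in> L"
    and y: "y = [k] \<cdot> w \<oplus> l" "l \<in> L"
    using int_multiples_plus_w_bstar_w_subset_L unfolding int_multiples_plus_def by blast
  have in_I: "e \<in> I" if "e \<in> carrier A" "e \<ominus> [n] \<cdot> (w \<star> w) \<in> M" for e and n :: int
    using that mem_int_multiples_plus_iff[of "w \<star> w" M e] w_carrier
      subset_int_multiples_plus[of "int_multiples_plus A (w \<star> w) M" w]
      int_multiples_plus_w_bstar_w_subset_L L.a_subset by blast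
  have carriers: "y \<in> carrier A" "s \<in> carrier A"
    using s y w_carrier L.a_subset by auto
  show "y \<star> s \<in> I \<and> s \<star> y \<in> I"
    unfolding s(1) y(1)
    using in_I[OF _ bstar_int_multiples_plus_pair_cong[OF w_center y(2) s(2)]]
      in_I[OF _ bstar_int_multiples_plus_pair_cong[OF w_center s(2) y(2)]] carriers s(1) y(1)
    by simp
qed

lemma ideal_I: "ideal_in A (carrier A) I"
  by (rule ideal_of_ideal_is_ideal[OF ideal_of_J_I ideal_J])

lemma w_in_I: "w \<in> I"
proof (rule generator_in_int_multiples_plus[OF _ w_carrier])
  show "\<zero> \<in> int_multiples_plus A (w \<star> w) M"
    using subset_int_multiples_plus[OF M.a_subset bstar_closed[OF w_carrier w_carrier]] M.zero_closed
    by (rule subsetD)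
qed

lemma I_inter_L_subset:
  assumes no_multiple: "\<not> (\<exists>n::int. n \<noteq> 0 \<and> [n] \<cdot> u \<in> L)"
  shows "I \<inter> L \<subseteq> int_multiples_plus A (w \<star> w) M"
proof
  fix e assume e: "e \<in> I \<inter> L"
  then obtain m :: int where r: "e \<ominus> [m] \<cdot> w \<in> int_multiples_plus A (w \<star> w) M"
    and e_carrier: "e \<in> carrier A"
    using mem_int_multiples_plus_iff[OF w_carrier] int_multiples_plus_w_bstar_w_subset_L L.a_subset
    by blast
  then have "e \<ominus> [m] \<cdot> w \<in> L"
    using int_multiples_plus_w_bstar_w_subset_L by blast
  from diff_mem_imp_mem_iff[OF L.a_subgroup _ _ this] have "[(2 * m)] \<cdot> u \<in> L"
    using e e_carrier u_carrier by (simp add: add.int_pow_pow)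
  then have "2 * m = 0"
    using no_multiple by blast
  then have "e \<ominus> [m] \<cdot> w = e"
    using e_carrier by (simp add: minus_eq)
  then show "e \<in> int_multiples_plus A (w \<star> w) M"
    using r by simp
qed

lemma w_bstar_w_torsion:
  assumes no_multiple: "\<not> (\<exists>n::int. n \<noteq> 0 \<and> [n] \<cdot> u \<in> L)"
  shows "w \<star> w \<in> torsion"
proof -
  let ?e = "u \<star> w"
  have e_carrier: "?e \<in> carrier A"
    using u_carrier w_carrier by simp
  have "?e \<in> I \<inter> L"
    using ideal_bstar_closed[OF ideal_I w_in_I u_carrier] w_center u_carrier
    by (auto simp: star_center_over_def)
  then have "?e \<in> int_multiples_plus A (w \<star> w) M"
    using I_inter_L_subset[OF no_multiple] by blast
  then obtain j :: int where e: "?e \<ominus> [j] \<cdot> (w \<star> w) \<in> torsion"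
    using mem_int_multiples_plus_iff[OF _ M.a_subset] w_carrier by blast
  have d: "w \<star> w \<ominus> [(2::int)] \<cdot> ?e \<in> torsion"
    using bstar_int_pow_left_cong[OF u_center w_carrier, of 2] by blast
  have "[j] \<cdot> (w \<star> w) \<ominus> [(2 * j)] \<cdot> ?e \<in> torsion"
    using diff_mem_int_pow[OF torsion_subgroup _ _ d, of j] w_carrier e_carrier
    by (simp add: add.int_pow_pow)
  from diff_mem_trans[OF torsion_subgroup _ _ _ e this]
  have "[(1 - 2 * j)] \<cdot> ?e \<in> torsion"
    using w_carrier e_carrier by (simp add: add.int_pow_diff minus_eq)
  moreover have "1 - 2 * j \<noteq> 0" \<comment> \<open>this is why w is taken to be 2u rather than u\<close>
    by presburger
  ultimately have "?e \<in> torsion"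
    using int_pow_mem_torsion_iff e_carrier by blast
  then have "[(2::int)] \<cdot> ?e \<in> torsion"
    using int_pow_mem_torsion_iff e_carrier by simp
  then show ?thesis
    using diff_mem_imp_mem_iff[OF torsion_subgroup _ _ d] w_carrier e_carrier by simp
qed

lemma I_inter_L_torsion:
  assumes "\<not> (\<exists>n::int. n \<noteq> 0 \<and> [n] \<cdot> u \<in> L)"
  shows "I \<inter> L \<subseteq> torsion"
  using I_inter_L_subset[OF assms]
    int_multiples_plus_subset[OF torsion_subgroup w_bstar_w_torsion[OF assms] Int_lower2]
  by blast

lemma bstar_torsion:
  assumes x: "x \<in> carrier A"
  shows "x \<star> u \<in> torsion \<and> u \<star> x \<in> torsion"
proof (cases "\<exists>n::int. n \<noteq> 0 \<and> [n] \<cdot> u \<in> L")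
  case True
  then obtain n :: int where n: "n \<noteq> 0" "[n] \<cdot> u \<in> L"
    by blast
  then show ?thesis
    using bstar_L_torsion[OF n(2) x] by (intro torsion_if_bstar_int_pow_torsion[OF n(1) x]) auto
next
  case False
  then have "x \<star> w \<in> torsion" "w \<star> x \<in> torsion"
    using I_inter_L_torsion ideal_bstar_closed[OF ideal_I w_in_I x] w_center x
    by (auto simp: star_center_over_def)
  then show ?thesis
    using torsion_if_bstar_int_pow_torsion[of 2 x] x by simp
qed

end

lemma (in left_brace) upper_star_term_ideal_torsion:
  assumes T: "\<And>I J. ideal_in A J I \<Longrightarrow> ideal_in A (carrier A) J \<Longrightarrow> ideal_in A (carrier A) I"
    and "Z \<in> upper_star_terms A"
  shows "ideal_in A (carrier A) Z \<and> (\<forall>z\<in>Z. \<forall>x\<in>carrier A. x \<star> z \<in> torsion \<and> z \<star> x \<in> torsion)"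
  using assms(2)
proof (induction rule: upper_star_terms.induct)
  case zero
  show ?case
    using zero_ideal subgroup.one_closed[OF torsion_subgroup] by simp
next
  case (succ L)
  have "x \<star> u \<in> torsion \<and> u \<star> x \<in> torsion"
    if "u \<in> star_center_over A L" and "x \<in> carrier A" for u x
  proof -
    interpret hypercentral_step A L u
      using T succ.IH that(1) by unfold_locales auto
    show ?thesis
      by (rule bstar_torsion[OF that(2)])
  qed
  then show ?case
    using star_center_over_ideal succ.IH by blast
next
  case (limit C)
  then show ?case
    using Union_chain_ideal by blast
qed

theorem lemma4p1:
  fixes A :: "('a, 'b) ring_scheme"
  assumes "T_brace A"
  shows "(star_hypercentral A \<longrightarrow> (\<forall>g\<in>star_square A. finite_add_order A g))
       \<and> (\<forall>Z\<in>upper_star_terms A. \<forall>a\<in>Z. \<forall>b\<in>Z. finite_add_order A (bstar A a b))"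
proof -
  interpret left_brace A
    using assms by (intro left_braceI) (simp add: T_brace_def)
  have terms: "ideal_in A (carrier A) Z \<and> (\<forall>z\<in>Z. \<forall>x\<in>carrier A. x \<star> z \<in> torsion \<and> z \<star> x \<in> torsion)"
    if "Z \<in> upper_star_terms A" for Z
    using upper_star_term_ideal_torsion[OF _ that] assms by (auto simp: T_brace_def)
  have "star_square A \<subseteq> torsion" if "star_hypercentral A"
    unfolding star_square_def
    using terms[of "carrier A"] that
    by (intro add.generate_subgroup_incl torsion_subgroup) (auto simp: star_hypercentral_def)
  moreover have "bstar A a b \<in> torsion" if "Z \<in> upper_star_terms A" "a \<in> Z" "b \<in> Z" for Z a b
    using terms[OF that(1)] ideal_in_subset that by blast
  ultimately show ?thesis
    by (auto simp: torsion_def)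
qed

end
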